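(* Let $\mathbf{M}$ be a POMDP and $\beta\in[0,1)$. For $k\in\mathbb{N}$ let \[ E_{k,\max}:=\sup_{\mathbf{C}\in\overline{\mathcal{F}}_{k}(\mathbf{M})}\ \sum_{t=2}^{\infty}\beta^{t-2}H^{\mathbf{C}}(S_{t} \mid S^{t-1}). \] Then for all $j\leq k$, $E_{j,\max}\leq E_{k,\max}$.
   Context: A POMDP is $\mathbf{M}=(\mathcal{S},s_I,\mathcal{A},P,\mathcal{Z},O,R)$ with finite state set $\mathcal{S}$, initial state $s_I$, finite action set $\mathcal{A}$, transition probabilities $P(s'|s,a)$, finite observation set $\mathcal{Z}$, observation probabilities $O(z|s)$ and reward $R$. A $k$-FSC is $\mathbf{C}=(\mathcal{Q},q_1,\gamma,\delta)$ with memory states $\mathcal{Q}=\{q_1,\ldots,q_k\}$, initial memory $q_1$, decision function $\gamma:\mathcal{Q}\times\mathcal{Z}\to\Delta(\mathcal{A})$ and memory transition function $\delta:\mathcal{Q}\times\mathcal{Z}\times\mathcal{A}\to\Delta(\mathcal{Q})$. Under $\mathbf{C}$: $S_1=s_I$, $Q_1=q_1$, $Z_t\sim O(\cdot|S_t)$, $A_t\sim\gamma(\cdot|Q_t,Z_t)$, $S_{t+1}\sim P(\cdot|S_t,A_t)$, $Q_{t+1}\sim\delta(\cdot|Q_t,Z_t,A_t)$; $H^{\mathbf{C}}(S_t\mid S^{t-1})$ is the conditional entropy of $S_t$ given $(S_1,\ldots,S_{t-1})$ in this process. $\overline{\mathcal{F}}_k(\mathbf{M})$ is the set of $k$-FSCs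 (with arbitrary $\gamma$) whose memory transition function is $\overline{\delta}$ given by: for all $z\in\mathcal{Z}$, $a\in\mathcal{A}$, $\overline{\delta}(q_{i+1}|q_i,z,a)=1$ for $1\le i<k$, $\overline{\delta}(q_k|q_k,z,a)=1$, and $\overline{\delta}(q_i|q_j,z,a)=0$ otherwise. *)

theory Defs
  imports "HOL-Analysis.Analysis" "HOL-Library.FuncSet"
begin

text \<open>POMDP with finite state type 's, action type 'a, observation type 'z.
  P s a s' = P(s'|s,a), Obs s z = O(z|s). The reward plays no role in the statement.\<close>

definition is_pomdp :: "('s::finite \<Rightarrow> 'a::finite \<Rightarrow> 's \<Rightarrow> real) \<Rightarrow> ('s \<Rightarrow> 'z::finite \<Rightarrow> real) \<Rightarrow> bool" where
  "is_pomdp P Obs \<longleftrightarrow>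
     (\<forall>s a s'. 0 \<le> P s a s') \<and> (\<forall>s a. (\<Sum>s'\<in>UNIV. P s a s') = 1) \<and>
     (\<forall>s z. 0 \<le> Obs s z) \<and> (\<forall>s. (\<Sum>z\<in>UNIV. Obs s z) = 1)"

text \<open>A k-FSC has memory states q_1..q_k, represented as the naturals 1..k, initial memory 1.
  gam q z a = gamma(a|q,z); del q z a q' = delta(q'|q,z,a).\<close>

definition valid_decision :: "nat \<Rightarrow> (nat \<Rightarrow> 'z::finite \<Rightarrow> 'a::finite \<Rightarrow> real) \<Rightarrow> bool" where
  "valid_decision k gam \<longleftrightarrow>
     (\<forall>q\<in>{1..k}. \<forall>z. (\<forall>a. 0 \<le> gam q z a) \<and> (\<Sum>a\<in>UNIV. gam q z a) = 1)"

definition delta_bar :: "nat \<Rightarrow> nat \<Rightarrow> 'z \<Rightarrow> 'a \<Rightarrow> nat \<Rightarrow> real" where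
  "delta_bar k q z a q' =
     (if q < k then (if q' = q + 1 then 1 else 0)
      else if q = k then (if q' = k then 1 else 0) else 0)"

text \<open>fsc_alpha ... t ss q = Pr(S_1 = ss 1, ..., S_t = ss t, Q_t = q) under the controller.\<close>
fun fsc_alpha :: "('s::finite \<Rightarrow> 'a::finite \<Rightarrow> 's \<Rightarrow> real) \<Rightarrow> ('s \<Rightarrow> 'z::finite \<Rightarrow> real) \<Rightarrow> 's \<Rightarrow> nat
     \<Rightarrow> (nat \<Rightarrow> 'z \<Rightarrow> 'a \<Rightarrow> real) \<Rightarrow> (nat \<Rightarrow> 'z \<Rightarrow> 'a \<Rightarrow> nat \<Rightarrow> real)
     \<Rightarrow> nat \<Rightarrow> (nat \<Rightarrow> 's) \<Rightarrow> nat \<Rightarrow> real" where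
  "fsc_alpha P Obs sI k gam del 0 ss q = 0"
| "fsc_alpha P Obs sI k gam del (Suc 0) ss q = (if ss 1 = sI \<and> q = 1 then 1 else 0)"
| "fsc_alpha P Obs sI k gam del (Suc (Suc t)) ss q' =
     (\<Sum>q\<in>{1..k}. \<Sum>z\<in>UNIV. \<Sum>a\<in>UNIV.
        fsc_alpha P Obs sI k gam del (Suc t) ss q * Obs (ss (Suc t)) z * gam q z a
        * P (ss (Suc t)) a (ss (Suc (Suc t))) * del q z a q')"

definition state_seq_prob ::"('s::finite \<Rightarrow> 'a::finite \<Rightarrow> 's \<Rightarrow> real) \<Rightarrow> ('s \<Rightarrow> 'z::finite \<Rightarrow> real) \<Rightarrow> 's \<Rightarrow> nat
     \<Rightarrow> (nat \<Rightarrow> 'z \<Rightarrow> 'a \<Rightarrow> real) \<Rightarrow> (nat \<Rightarrow> 'z \<Rightarrow> 'a \<Rightarrow> nat \<Rightarrow> real) \<Rightarrow> nat \<Rightarrow> (nat \<Rightarrow> 's) \<Rightarrow> real" where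
  "state_seq_prob P Obs sI k gam del t ss = (\<Sum>q\<in>{1..k}. fsc_alpha P Obs sI k gam del t ss q)"

text \<open>Conditional entropy H(S_t | S^{t-1}) (natural logarithm, 0 log 0 = 0), for t >= 2.\<close>
definition cond_entropy ::"('s::finite \<Rightarrow> 'a::finite \<Rightarrow> 's \<Rightarrow> real) \<Rightarrow> ('s \<Rightarrow> 'z::finite \<Rightarrow> real) \<Rightarrow> 's \<Rightarrow> nat
     \<Rightarrow> (nat \<Rightarrow> 'z \<Rightarrow> 'a \<Rightarrow> real) \<Rightarrow> (nat \<Rightarrow> 'z \<Rightarrow> 'a \<Rightarrow> nat \<Rightarrow> real) \<Rightarrow> nat \<Rightarrow> real" where
  "cond_entropy P Obs sI k gam del t =
     (\<Sum>ss\<in>{1..t} \<rightarrow>\<^sub>E (UNIV::'s set).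
        let p = state_seq_prob P Obs sI k gam del t ss;
            p' = state_seq_prob P Obs sI k gam del (t - 1) ss
        in if p = 0 then 0 else - p * ln (p / p'))"

definition disc_entropy ::"('s::finite \<Rightarrow> 'a::finite \<Rightarrow> 's \<Rightarrow> real) \<Rightarrow> ('s \<Rightarrow> 'z::finite \<Rightarrow> real) \<Rightarrow> 's \<Rightarrow> nat
     \<Rightarrow> (nat \<Rightarrow> 'z \<Rightarrow> 'a \<Rightarrow> real) \<Rightarrow> (nat \<Rightarrow> 'z \<Rightarrow> 'a \<Rightarrow> nat \<Rightarrow> real) \<Rightarrow> real \<Rightarrow> real" where
  "disc_entropy P Obs sI k gam del \<beta> =
     (\<Sum>n. \<beta> ^ n * cond_entropy P Obs (sI::'s::finite) k gam del (n + 2))"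

definition E_max where
  "E_max P Obs sI \<beta> k =
     Sup {disc_entropy P Obs sI k gam (delta_bar k) \<beta> | gam. valid_decision k gam}"

end

theory Submission
  imports Defs
begin

text \<open>Under \<open>delta_bar k\<close> the memory is deterministic, \<open>Q\<^sub>t = min t k\<close>, so the state process
  of a controller in \<open>F-bar\<^sub>k\<close> is a time-inhomogeneous Markov chain whose step from time \<open>t\<close>
  uses the decision rule \<open>gam (min t k)\<close>. Hence a controller \<open>gam\<close> in \<open>F-bar\<^sub>j\<close>, \<open>j \<le> k\<close>,
  induces the same chain as the controller \<open>\<lambda>q. gam (min q j)\<close> in \<open>F-bar\<^sub>k\<close>, and every value
  in the supremum defining \<open>E_max j\<close> also occurs in the one defining \<open>E_max k\<close>. The latter
  supremum is finite: by \<open>ln x \<le> x - 1\<close> each conditional entropy is at most \<open>|S| - 1\<close>.\<close>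

definition stochastic :: "('r \<Rightarrow> 'c::finite \<Rightarrow> real) \<Rightarrow> bool" where
  "stochastic K \<longleftrightarrow> (\<forall>r c. 0 \<le> K r c) \<and> (\<forall>r. (\<Sum>c\<in>UNIV. K r c) = 1)"

lemma stochastic_nonneg: "stochastic K \<Longrightarrow> 0 \<le> K r c"
  by (simp add: stochastic_def)

lemma stochastic_sum: "stochastic K \<Longrightarrow> (\<Sum>c\<in>UNIV. K r c) = 1"
  by (simp add: stochastic_def)

lemma stochastic_le_1:
  assumes "stochastic K"
  shows "K r c \<le> 1"
proof -
  have "K r c \<le> (\<Sum>c\<in>UNIV. K r c)"
    using assms by (intro member_le_sum) (auto simp: stochastic_nonneg)
  then show ?thesis using assms by (simp add: stochastic_sum)
qed

lemma sum_PiE_insert: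
  assumes "x \<notin> S"
  shows "(\<Sum>f\<in>Pi\<^sub>E (insert x S) T. g f) = (\<Sum>y\<in>T x. \<Sum>f\<in>Pi\<^sub>E S T. g (f(x := y)))"
proof -
  have "(\<Sum>f\<in>Pi\<^sub>E (insert x S) T. g f) = (\<Sum>(y, f)\<in>T x \<times> Pi\<^sub>E S T. g (f(x := y)))"
    unfolding PiE_insert_eq sum.reindex[OF inj_combinator[OF assms]] by (simp add: comp_def split_def)
  then show ?thesis by (simp add: sum.cartesian_product)
qed

lemma entropy_summand_bounds:
  fixes p p' :: real
  assumes "0 \<le> p" "p \<le> p'"
  shows "0 \<le> (if p = 0 then 0 else - p * ln (p / p'))"
    and "(if p = 0 then 0 else - p * ln (p / p')) \<le> p' - p"
proof -
  consider "p = 0" | "0 < p" using assms(1) by linarith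
  then have "0 \<le> (if p = 0 then 0 else - p * ln (p / p')) \<and>
             (if p = 0 then 0 else - p * ln (p / p')) \<le> p' - p"
  proof cases
    case 2
    then have "0 < p'" using assms(2) by linarith
    have entropy: "- p * ln (p / p') = p * ln (p' / p)"
      using \<open>0 < p\<close> \<open>0 < p'\<close> by (simp add: ln_div algebra_simps)
    have "0 \<le> p * ln (p' / p)" using \<open>0 < p\<close> assms(2) by simp
    moreover have "p * ln (p' / p) \<le> p * (p' / p - 1)"
      using \<open>0 < p\<close> \<open>0 < p'\<close> by (intro mult_left_mono ln_le_minus_one) auto
    moreover have "p * (p' / p - 1) = p' - p" using \<open>0 < p\<close> by (simp add: field_simps)
    ultimately show ?thesis using \<open>0 < p\<close> by (simp only: if_not_P entropy)
  qed (use assms in simp)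
  then show "0 \<le> (if p = 0 then 0 else - p * ln (p / p'))"
    and "(if p = 0 then 0 else - p * ln (p / p')) \<le> p' - p" by simp_all
qed

lemma suminf_discounted_le:
  fixes c :: "nat \<Rightarrow> real"
  assumes "\<And>n. 0 \<le> c n" "\<And>n. c n \<le> C" "0 \<le> \<beta>" "\<beta> < 1"
  shows "(\<Sum>n. \<beta> ^ n * c n) \<le> C / (1 - \<beta>)"
proof -
  have geometric: "summable (\<lambda>n. \<beta> ^ n * C)"
    using assms(3,4) by (intro summable_mult2 summable_geometric) simp
  have le: "\<beta> ^ n * c n \<le> \<beta> ^ n * C" for n
    using assms by (simp add: mult_left_mono)
  have "summable (\<lambda>n. \<beta> ^ n * c n)"
    using assms le by (intro summable_comparison_test'[OF geometric, of 0]) simp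
  then have "(\<Sum>n. \<beta> ^ n * c n) \<le> (\<Sum>n. \<beta> ^ n * C)"
    using geometric le by (intro suminf_le)
  also have "\<dots> = C / (1 - \<beta>)"
    using assms(3,4) by (simp add: suminf_mult2[symmetric] suminf_geometric)
  finally show ?thesis .
qed

text \<open>Probability that a time-inhomogeneous chain started in \<open>sI\<close> visits \<open>ss 1, \<dots>, ss t\<close>;
  \<open>K t\<close> is the kernel of the step from time \<open>t + 1\<close> to time \<open>t + 2\<close>.\<close>
fun path_prob :: "'s \<Rightarrow> (nat \<Rightarrow> 's \<Rightarrow> 's \<Rightarrow> real) \<Rightarrow> nat \<Rightarrow> (nat \<Rightarrow> 's) \<Rightarrow> real" where
  "path_prob sI K 0 ss = 0"
| "path_prob sI K (Suc 0) ss = (if ss 1 = sI then 1 else 0)"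
| "path_prob sI K (Suc (Suc t)) ss = path_prob sI K (Suc t) ss * K t (ss (Suc t)) (ss (Suc (Suc t)))"

definition chain_cond_entropy :: "'s::finite \<Rightarrow> (nat \<Rightarrow> 's \<Rightarrow> 's \<Rightarrow> real) \<Rightarrow> nat \<Rightarrow> real" where
  "chain_cond_entropy sI K t =
     (\<Sum>ss\<in>{1..t} \<rightarrow>\<^sub>E (UNIV::'s set).
        let p = path_prob sI K t ss; p' = path_prob sI K (t - 1) ss
        in if p = 0 then 0 else - p * ln (p / p'))"

lemma path_prob_cong:
  "(\<And>i. i \<in> {1..t} \<Longrightarrow> ss i = ss' i) \<Longrightarrow> path_prob sI K t ss = path_prob sI K t ss'"
  by (induction sI K t ss rule: path_prob.induct) auto

lemma path_prob_fun_upd_Suc: "path_prob sI K t (ss(Suc t := s)) = path_prob sI K t ss"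
  by (rule path_prob_cong) auto

context
  fixes K :: "nat \<Rightarrow> 's::finite \<Rightarrow> 's \<Rightarrow> real"
  assumes stochastic_K: "\<And>t. stochastic (K t)"
begin

lemma path_prob_nonneg: "0 \<le> path_prob sI K t ss"
proof (cases t)
  case (Suc n)
  show ?thesis unfolding Suc
    by (induction n) (simp_all add: stochastic_nonneg[OF stochastic_K])
qed simp

lemma path_prob_Suc_le: "path_prob sI K (Suc (Suc t)) ss \<le> path_prob sI K (Suc t) ss"
  using mult_left_le[OF stochastic_le_1[OF stochastic_K] path_prob_nonneg] by simp

lemma sum_path_prob: "(\<Sum>ss\<in>{1..Suc n} \<rightarrow>\<^sub>E (UNIV::'s set). path_prob sI K (Suc n) ss) = 1"
proof (induction n)
  case 0
  show ?case by (simp add: sum_PiE_insert sum.delta)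
next
  case (Suc n)
  have "{1..Suc (Suc n)} = insert (Suc (Suc n)) {1..Suc n}" by auto
  then have "(\<Sum>ss\<in>{1..Suc (Suc n)} \<rightarrow>\<^sub>E UNIV. path_prob sI K (Suc (Suc n)) ss)
      = (\<Sum>ss\<in>{1..Suc n} \<rightarrow>\<^sub>E UNIV. path_prob sI K (Suc n) ss * (\<Sum>s\<in>UNIV. K n (ss (Suc n)) s))"
    by (simp add: sum_PiE_insert path_prob_fun_upd_Suc sum_distrib_left sum.swap[where A = UNIV])
  then show ?case using Suc by (simp add: stochastic_sum[OF stochastic_K])
qed

end

lemma chain_cond_entropy_bounds:
  fixes K :: "nat \<Rightarrow> 's::finite \<Rightarrow> 's \<Rightarrow> real"
  assumes "\<And>t. stochastic (K t)"
  shows "0 \<le> chain_cond_entropy sI K (Suc (Suc m))"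
    and "chain_cond_entropy sI K (Suc (Suc m)) \<le> real CARD('s) - 1"
proof -
  let ?p = "\<lambda>t ss. path_prob sI K t ss"
  let ?paths = "{1..Suc (Suc m)} \<rightarrow>\<^sub>E (UNIV::'s set)"
  note summand = entropy_summand_bounds[OF path_prob_nonneg path_prob_Suc_le, OF assms assms]
  show "0 \<le> chain_cond_entropy sI K (Suc (Suc m))"
    unfolding chain_cond_entropy_def Let_def diff_Suc_1 by (intro sum_nonneg summand(1))
  have "chain_cond_entropy sI K (Suc (Suc m))
      \<le> (\<Sum>ss\<in>?paths. ?p (Suc m) ss) - (\<Sum>ss\<in>?paths. ?p (Suc (Suc m)) ss)"
    unfolding chain_cond_entropy_def Let_def diff_Suc_1 sum_subtractf[symmetric]
    by (intro sum_mono summand(2))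
  also have "(\<Sum>ss\<in>?paths. ?p (Suc m) ss) = real CARD('s)"
  proof -
    have "{1..Suc (Suc m)} = insert (Suc (Suc m)) {1..Suc m}" by auto
    then show ?thesis using sum_path_prob[of K, OF assms, of sI m]
      by (simp add: sum_PiE_insert path_prob_fun_upd_Suc)
  qed
  also have "(\<Sum>ss\<in>?paths. ?p (Suc (Suc m)) ss) = 1"
    by (rule sum_path_prob[of K, OF assms])
  finally show "chain_cond_entropy sI K (Suc (Suc m)) \<le> real CARD('s) - 1" .
qed

lemma valid_decision_iff_stochastic:
  "valid_decision k gam \<longleftrightarrow> (\<forall>q\<in>{1..k}. stochastic (gam q))"
  by (auto simp: valid_decision_def stochastic_def)

definition controlled_kernel ::
  "('s \<Rightarrow> 'a::finite \<Rightarrow> 's \<Rightarrow> real) \<Rightarrow> ('s \<Rightarrow> 'z::finite \<Rightarrow> real) \<Rightarrow> ('z \<Rightarrow> 'a \<Rightarrow> real) \<Rightarrow> 's \<Rightarrow> 's \<Rightarrow> real"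
  where "controlled_kernel P Obs g s s' = (\<Sum>z\<in>UNIV. \<Sum>a\<in>UNIV. Obs s z * g z a * P s a s')"

lemma stochastic_controlled_kernel:
  fixes P :: "'s::finite \<Rightarrow> 'a::finite \<Rightarrow> 's \<Rightarrow> real" and Obs :: "'s \<Rightarrow> 'z::finite \<Rightarrow> real"
  assumes pomdp: "is_pomdp P Obs" and g: "stochastic g"
  shows "stochastic (controlled_kernel P Obs g)"
  unfolding stochastic_def
proof safe
  fix s s'
  show "0 \<le> controlled_kernel P Obs g s s'"
    using pomdp g unfolding controlled_kernel_def is_pomdp_def
    by (intro sum_nonneg mult_nonneg_nonneg) (auto simp: stochastic_nonneg)
next
  fix s
  have "(\<Sum>s'\<in>UNIV. controlled_kernel P Obs g s s')
      = (\<Sum>z\<in>UNIV. \<Sum>a\<in>UNIV. Obs s z * g z a * (\<Sum>s'\<in>UNIV. P s a s'))"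
    unfolding controlled_kernel_def sum_distrib_left
    by (subst sum.swap, intro sum.cong refl, subst sum.swap) simp
  also have "\<dots> = (\<Sum>z\<in>UNIV. Obs s z * (\<Sum>a\<in>UNIV. g z a))"
    using pomdp by (simp add: is_pomdp_def sum_distrib_left)
  also have "\<dots> = 1"
    using pomdp g by (simp add: is_pomdp_def stochastic_sum)
  finally show "(\<Sum>s'\<in>UNIV. controlled_kernel P Obs g s s') = 1" .
qed

lemma fsc_alpha_delta_bar:
  assumes "1 \<le> k"
  shows "fsc_alpha P Obs sI k gam (delta_bar k) (Suc t) ss q =
     (if q = min (Suc t) k
      then path_prob sI (\<lambda>t. controlled_kernel P Obs (gam (min (Suc t) k))) (Suc t) ss else 0)"
proof (induction t arbitrary: q)
  case 0
  then show ?case using assms by auto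
next
  case (Suc t)
  let ?m = "min (Suc t) k"
  let ?p = "path_prob sI (\<lambda>t. controlled_kernel P Obs (gam (min (Suc t) k))) (Suc t) ss"
  have delta_bar_m: "delta_bar k ?m z a q = (if q = min (Suc (Suc t)) k then 1 else 0)" for z a
    using assms by (auto simp: delta_bar_def min_def)
  have "?m \<in> {1..k}" using assms by auto
  have "fsc_alpha P Obs sI k gam (delta_bar k) (Suc (Suc t)) ss q =
      (\<Sum>q'\<in>{1..k}. if q' = ?m then (\<Sum>z\<in>UNIV. \<Sum>a\<in>UNIV. ?p * Obs (ss (Suc t)) z
         * gam ?m z a * P (ss (Suc t)) a (ss (Suc (Suc t))) * delta_bar k ?m z a q) else 0)"
    by (simp only: fsc_alpha.simps Suc.IH, intro sum.cong refl) auto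
  also have "\<dots> = (\<Sum>z\<in>UNIV. \<Sum>a\<in>UNIV. ?p * Obs (ss (Suc t)) z
         * gam ?m z a * P (ss (Suc t)) a (ss (Suc (Suc t))) * delta_bar k ?m z a q)"
    using \<open>?m \<in> {1..k}\<close> by (simp add: sum.delta)
  also have "\<dots> = (if q = min (Suc (Suc t)) k
      then ?p * controlled_kernel P Obs (gam ?m) (ss (Suc t)) (ss (Suc (Suc t))) else 0)"
    by (simp add: delta_bar_m controlled_kernel_def[of P Obs "gam ?m"] sum_distrib_left mult.assoc)
  finally show ?case by simp
qed

lemma state_seq_prob_delta_bar:
  assumes "1 \<le> k"
  shows "state_seq_prob P Obs sI k gam (delta_bar k) t ss =
     path_prob sI (\<lambda>t. controlled_kernel P Obs (gam (min (Suc t) k))) t ss"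
proof (cases t)
  case (Suc n)
  have "min (Suc n) k \<in> {1..k}" using assms by auto
  then show ?thesis
    unfolding state_seq_prob_def Suc fsc_alpha_delta_bar[OF assms] by (simp add: sum.delta)
qed (simp add: state_seq_prob_def)

lemma cond_entropy_delta_bar:
  assumes "1 \<le> k"
  shows "cond_entropy P Obs sI k gam (delta_bar k) t =
     chain_cond_entropy sI (\<lambda>t. controlled_kernel P Obs (gam (min (Suc t) k))) t"
  unfolding cond_entropy_def chain_cond_entropy_def state_seq_prob_delta_bar[OF assms] ..

lemma disc_entropy_delta_bar_lift:
  assumes "1 \<le> j" "j \<le> k"
  shows "disc_entropy P Obs sI j gam (delta_bar j) \<beta> =
         disc_entropy P Obs sI k (\<lambda>q. gam (min q j)) (delta_bar k) \<beta>"
proof -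
  have "min (min (Suc t) k) j = min (Suc t) j" for t
    using assms by (auto simp: min_def)
  then show ?thesis
    using assms unfolding disc_entropy_def by (simp add: cond_entropy_delta_bar)
qed

lemma disc_entropy_delta_bar_le:
  fixes P :: "'s::finite \<Rightarrow> 'a::finite \<Rightarrow> 's \<Rightarrow> real" and Obs :: "'s \<Rightarrow> 'z::finite \<Rightarrow> real"
  assumes "is_pomdp P Obs" "valid_decision k gam" "1 \<le> k" "0 \<le> \<beta>" "\<beta> < 1"
  shows "disc_entropy P Obs sI k gam (delta_bar k) \<beta> \<le> (real CARD('s) - 1) / (1 - \<beta>)"
proof -
  have "stochastic (controlled_kernel P Obs (gam (min (Suc t) k)))" for t
    using assms(1-3) by (intro stochastic_controlled_kernel) (auto simp: valid_decision_iff_stochastic)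
  note bounds = chain_cond_entropy_bounds[OF this]
  show ?thesis
    unfolding disc_entropy_def cond_entropy_delta_bar[OF assms(3)] numeral_2_eq_2 add_Suc_right add_0_right
    using bounds assms(4,5) by (intro suminf_discounted_le)
qed

theorem lemma2:
  fixes P :: "'s::finite \<Rightarrow> 'a::finite \<Rightarrow> 's \<Rightarrow> real"
    and Obs :: "'s \<Rightarrow> 'z::finite \<Rightarrow> real"
    and sI :: 's and \<beta> :: real and j k :: nat
  assumes "is_pomdp P Obs"
    and "0 \<le> \<beta>" and "\<beta> < 1"
    and "1 \<le> j" and "j \<le> k"
  shows "E_max P Obs sI \<beta> j \<le> E_max P Obs sI \<beta> k"
  unfolding E_max_def
proof (rule cSup_mono)
  have "valid_decision j (\<lambda>(q::nat) (z::'z) (a::'a). 1 / real CARD('a))"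
    unfolding valid_decision_def by simp
  then show "{disc_entropy P Obs sI j gam (delta_bar j) \<beta> | gam. valid_decision j gam} \<noteq> {}"
    by blast
  have "1 \<le> k" using assms(4,5) by simp
  show "bdd_above {disc_entropy P Obs sI k gam (delta_bar k) \<beta> | gam. valid_decision k gam}"
    using disc_entropy_delta_bar_le[OF assms(1) _ \<open>1 \<le> k\<close> assms(2,3)] by (auto simp: bdd_above_def)
next
  fix x assume "x \<in> {disc_entropy P Obs sI j gam (delta_bar j) \<beta> | gam. valid_decision j gam}"
  then obtain gam where "valid_decision j gam" and x: "x = disc_entropy P Obs sI j gam (delta_bar j) \<beta>"
    by blast
  then have "valid_decision k (\<lambda>q. gam (min q j))"
    using assms(4) by (auto simp: valid_decision_def min_def)
  then show "\<exists>y \<in> {disc_entropy P Obs sI k gam (delta_bar k) \<beta> | gam. valid_decision k gam}. x \<le> y"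
    using x disc_entropy_delta_bar_lift[OF assms(4,5)] by blast
qed

end
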